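(* Let $\ell$ be a prime with $\ell\nmid p-1$, $\mathcal{O}$ the valuation ring of $\mathbb{Q}_\ell(\mu_{p-1})$, and $Y$ as in the context. For every character $\psi:\Delta\to\mathcal{O}^\times$, $$e_\psi\,\mathrm{BF}_{\mathcal{O}}(Y)\cong\mathcal{O}/\psi(p\theta)\mathcal{O}.$$ In particular, if $\psi$ is even and nontrivial, then $e_\psi\mathrm{BF}_{\mathcal{O}}(Y)\cong\mathcal{O}$.
   Context: Let $p$ be an odd prime, $\Delta=\mathrm{Gal}(\mathbb{Q}(\zeta_p)/\mathbb{Q})$, $\sigma_i:\zeta_p\mapsto\zeta_p^i$, $j=\sigma_{-1}$; $\psi$ is even if $\psi(j)=1$. $p\theta=-\sum_{i=1}^{p-1}i\sigma_i^{-1}\in\mathbb{Z}[\Delta]$, and $\psi$ is extended linearly to the group ring. Digraphs have incidence $e\mapsto(o(e),t(e))$; derived digraph $X(G,\alpha)$: vertices $V_X\times G$, edges $E_X\times G$, $o(e,\sigma)=(o(e),\sigma)$, $t(e,\sigma)=(t(e),\sigma\alpha(e))$, $G$ acting by left multiplication on the second coordinate. $X$ is the bouquet with $\frac{p-1}{2}p+1$ loops $e_0$, $e_{i,k}$ ($1\le k\le i\le p-1$), $\alpha(e_0)=\sigma_1$, $\alpha(e_{i,k})=\sigma_i^{-1}$, $Y=X(\Delta,\alpha)$. $\mathcal{A}_Y(w)=\sum_{o(\varepsilon)=w}t(\varepsilon)$, $\mathrm{BF}(Y)=\mathrm{coker}(\mathcal{I}-\mathcal{A}_Y)$ (a $\mathbb{Z}[\Delta]$-module),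 $\mathrm{BF}_{\mathcal{O}}(Y)=\mathcal{O}\otimes_{\mathbb{Z}_\ell}(\mathbb{Z}_\ell\otimes_{\mathbb{Z}}\mathrm{BF}(Y))$, and $e_\psi=\frac{1}{p-1}\sum_{\sigma\in\Delta}\psi(\sigma)\sigma^{-1}\in\mathcal{O}[\Delta]$. *)

theory Defs
  imports "HOL-Computational_Algebra.Primes"
begin

section \<open>The Galois group Delta = Gal(Q(zeta_p)/Q), sigma_i encoded by i in {1..p-1}\<close>

definition Delta :: "nat \<Rightarrow> nat set" where
  "Delta p = {1..p-1}"

definition dmult :: "nat \<Rightarrow> nat \<Rightarrow> nat \<Rightarrow> nat" where
  "dmult p i j = (i * j) mod p"

definition dinv :: "nat \<Rightarrow> nat \<Rightarrow> nat" where
  "dinv p i = (THE j. j \<in> Delta p \<and> dmult p i j = 1)"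

definition is_character :: "nat \<Rightarrow> (nat \<Rightarrow> 'o::idom) \<Rightarrow> bool" where
  "is_character p \<psi> \<longleftrightarrow>
     (\<forall>i\<in>Delta p. \<forall>j\<in>Delta p. \<psi> (dmult p i j) = \<psi> i * \<psi> j) \<and>
     (\<forall>i\<in>Delta p. \<psi> i dvd 1)"

text \<open>psi(p theta), p theta = - sum_i i sigma_i^(-1)\<close>
definition ptheta_val :: "nat \<Rightarrow> (nat \<Rightarrow> 'o::idom) \<Rightarrow> 'o" where
  "ptheta_val p \<psi> = - (\<Sum>i\<in>Delta p. of_nat i * \<psi> (dinv p i))"

text \<open>A complete discrete valuation ring with uniformizer l (so unramified over Z_l),
  containing a primitive (p-1)-th root of unity zeta whose residue generates the residue
  field over F_l. This characterizes O up to isomorphism.\<close>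
definition O_ring :: "nat \<Rightarrow> nat \<Rightarrow> 'o::idom itself \<Rightarrow> bool" where
  "O_ring l p T \<longleftrightarrow>
     (of_nat l :: 'o) \<noteq> 0 \<and> \<not> (of_nat l :: 'o) dvd 1 \<and>
     (\<forall>x::'o. x \<noteq> 0 \<longrightarrow> (\<exists>u n. u dvd 1 \<and> x = u * of_nat l ^ n)) \<and>
     (\<forall>x::nat \<Rightarrow> 'o. (\<forall>n. of_nat l ^ n dvd x (Suc n) - x n) \<longrightarrow>
        (\<exists>y. \<forall>n. of_nat l ^ n dvd y - x n)) \<and>
     (\<exists>\<zeta>::'o. \<zeta> ^ (p - 1) = 1 \<and> (\<forall>k. 0 < k \<and> k < p - 1 \<longrightarrow> \<zeta> ^ k \<noteq> 1) \<and>
        (\<forall>x::'o. \<exists>c::nat \<Rightarrow> int. of_nat l dvd x - (\<Sum>k<p - 1. of_int (c k) * \<zeta> ^ k)))"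

definition inv_pm1 :: "nat \<Rightarrow> 'o::idom" where
  "inv_pm1 p = (THE u. u * of_nat (p - 1) = 1)"

definition free_mod :: "'v set \<Rightarrow> ('v \<Rightarrow> 'o::zero) set" where
  "free_mod V = {f. \<forall>v. v \<notin> V \<longrightarrow> f v = 0}"

text \<open>A(w) = sum_{o(e)=w} t(e), written in coordinates: (A f)(v) = sum_{t(e)=v} f(o(e))\<close>
definition adj_op :: "'e set \<Rightarrow> ('e \<Rightarrow> 'v) \<Rightarrow> ('e \<Rightarrow> 'v) \<Rightarrow> ('v \<Rightarrow> 'o::comm_monoid_add) \<Rightarrow> 'v \<Rightarrow> 'o" where
  "adj_op E org trm f = (\<lambda>v. \<Sum>e\<in>{e\<in>E. trm e = v}. f (org e))"

text \<open>congruence modulo the image of I - A on the free O-module on V (cokernel)\<close>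
definition bf_rel :: "'v set \<Rightarrow> 'e set \<Rightarrow> ('e \<Rightarrow> 'v) \<Rightarrow> ('e \<Rightarrow> 'v) \<Rightarrow> (('v \<Rightarrow> 'o::comm_ring_1) \<times> ('v \<Rightarrow> 'o)) set" where
  "bf_rel V E org trm = {(f, g). f \<in> free_mod V \<and> g \<in> free_mod V \<and>
      (\<exists>h\<in>free_mod V. (\<lambda>v. f v - g v) = (\<lambda>v. h v - adj_op E org trm h v))}"

definition der_org :: "('e \<Rightarrow> 'v) \<Rightarrow> 'e \<times> 'g \<Rightarrow> 'v \<times> 'g" where
  "der_org org = (\<lambda>(e, s). (org e, s))"

definition der_trm :: "('g \<Rightarrow> 'g \<Rightarrow> 'g) \<Rightarrow> ('e \<Rightarrow> 'g) \<Rightarrow> ('e \<Rightarrow> 'v) \<Rightarrow> 'e \<times> 'g \<Rightarrow> 'v \<times> 'g" where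
  "der_trm gm \<alpha> trm = (\<lambda>(e, s). (trm e, gm s (\<alpha> e)))"

definition VtX :: "unit set" where "VtX = {()}"

definition EdX :: "nat \<Rightarrow> (nat \<times> nat) set" where
  "EdX p = {(0, 0)} \<union> {(i, k). 1 \<le> k \<and> k \<le> i \<and> i \<le> p - 1}"

definition orgX :: "nat \<times> nat \<Rightarrow> unit" where "orgX = (\<lambda>_. ())"
definition trmX :: "nat \<times> nat \<Rightarrow> unit" where "trmX = (\<lambda>_. ())"

definition alphaX :: "nat \<Rightarrow> nat \<times> nat \<Rightarrow> nat" where
  "alphaX p e = (if e = (0, 0) then 1 else dinv p (fst e))"

definition VY :: "nat \<Rightarrow> (unit \<times> nat) set" where "VY p = VtX \<times> Delta p"
definition EY :: "nat \<Rightarrow> ((nat \<times> nat) \<times> nat) set" where "EY p = EdX p \<times> Delta p"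
definition orgY :: "(nat \<times> nat) \<times> nat \<Rightarrow> unit \<times> nat" where "orgY = der_org orgX"
definition trmY :: "nat \<Rightarrow> (nat \<times> nat) \<times> nat \<Rightarrow> unit \<times> nat" where
  "trmY p = der_trm (dmult p) (alphaX p) trmX"

text \<open>Action of sigma on O^(V_Y) induced by sigma.(v,tau) = (v, sigma tau)\<close>
definition grp_act :: "nat \<Rightarrow> nat \<Rightarrow> (unit \<times> nat \<Rightarrow> 'o::zero) \<Rightarrow> unit \<times> nat \<Rightarrow> 'o" where
  "grp_act p \<sigma> f = (\<lambda>(v, \<tau>). if \<tau> \<in> Delta p then f (v, dmult p (dinv p \<sigma>) \<tau>) else 0)"

definition e_proj :: "nat \<Rightarrow> (nat \<Rightarrow> 'o::idom) \<Rightarrow> (unit \<times> nat \<Rightarrow> 'o) \<Rightarrow> unit \<times> nat \<Rightarrow> 'o" where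
  "e_proj p \<psi> f = (\<lambda>w. inv_pm1 p * (\<Sum>\<sigma>\<in>Delta p. \<psi> \<sigma> * grp_act p (dinv p \<sigma>) f w))"

text \<open>e_psi BF_O(Y) = (e_psi O^(V_Y)) / (image of I - A_Y intersected with it)\<close>
definition ebf_carrier :: "nat \<Rightarrow> (nat \<Rightarrow> 'o::idom) \<Rightarrow> (unit \<times> nat \<Rightarrow> 'o) set" where
  "ebf_carrier p \<psi> = e_proj p \<psi> ` free_mod (VY p)"

definition ebf_rel :: "nat \<Rightarrow> (nat \<Rightarrow> 'o::idom) \<Rightarrow> ((unit \<times> nat \<Rightarrow> 'o) \<times> (unit \<times> nat \<Rightarrow> 'o)) set" where
  "ebf_rel p \<psi> = bf_rel (VY p) (EY p) orgY (trmY p) \<inter> (ebf_carrier p \<psi> \<times> ebf_carrier p \<psi>)"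

definition fadd :: "('v \<Rightarrow> 'o::plus) \<Rightarrow> ('v \<Rightarrow> 'o) \<Rightarrow> 'v \<Rightarrow> 'o" where
  "fadd f g = (\<lambda>v. f v + g v)"
definition fsmul :: "'o::times \<Rightarrow> ('v \<Rightarrow> 'o) \<Rightarrow> 'v \<Rightarrow> 'o" where
  "fsmul r f = (\<lambda>v. r * f v)"

definition ideal_rel :: "'o::comm_ring_1 \<Rightarrow> ('o \<times> 'o) set" where
  "ideal_rel c = {(a, b). c dvd a - b}"

definition quot_iso :: "'a set \<Rightarrow> ('a \<times> 'a) set \<Rightarrow> ('a \<Rightarrow> 'a \<Rightarrow> 'a) \<Rightarrow> ('o \<Rightarrow> 'a \<Rightarrow> 'a)
   \<Rightarrow> 'b set \<Rightarrow> ('b \<times> 'b) set \<Rightarrow> ('b \<Rightarrow> 'b \<Rightarrow> 'b) \<Rightarrow> ('o \<Rightarrow> 'b \<Rightarrow> 'b) \<Rightarrow> bool" where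
  "quot_iso A R1 add1 smul1 B R2 add2 smul2 \<longleftrightarrow>
     (\<exists>\<Phi>. bij_betw \<Phi> (A // R1) (B // R2) \<and>
       (\<forall>x\<in>A. \<forall>y\<in>A. \<forall>x'\<in>B. \<forall>y'\<in>B.
          \<Phi> (R1 `` {x}) = R2 `` {x'} \<and> \<Phi> (R1 `` {y}) = R2 `` {y'} \<longrightarrow>
          \<Phi> (R1 `` {add1 x y}) = R2 `` {add2 x' y'}) \<and>
       (\<forall>r. \<forall>x\<in>A. \<forall>x'\<in>B. \<Phi> (R1 `` {x}) = R2 `` {x'} \<longrightarrow>
          \<Phi> (R1 `` {smul1 r x}) = R2 `` {smul2 r x'}))"

end

theory Submission
  imports Defs "HOL-Number_Theory.Cong"
begin

text \<open>Since l does not divide p - 1, the integer p - 1 is a unit of O, and the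
  \<psi>-part of the free module on the vertices of Y is free of rank one, spanned by the
  vertex function v(\<sigma>) = \<psi>(\<sigma>\<inverse>) (\<open>char_vec\<close> below). On vertex functions the
  adjacency operator of Y acts as h(\<tau>) \<mapsto> h(\<tau>) + \<Sum>_i i h(\<tau>\<sigma>_i), so I - A multiplies
  v by \<psi>(p\<theta>). Conversely the functional h \<mapsto> \<Sum>_\<sigma> \<psi>(\<sigma>) h(\<sigma>) turns I - A into
  multiplication by \<psi>(p\<theta>) and sends v to p - 1; hence c v lies in the image of I - A
  iff \<psi>(p\<theta>) divides c. For even nontrivial \<psi> the substitution i \<mapsto> p - i gives
  2\<psi>(p\<theta>) = p \<Sum>_\<sigma> \<psi>(\<sigma>) = 0.\<close>

section \<open>The group Delta\<close>

lemma Delta_finite [simp]: "finite (Delta p)"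
  by (simp add: Delta_def)

lemma card_Delta: "card (Delta p) = p - 1"
  by (simp add: Delta_def)

lemma one_in_Delta: "prime p \<Longrightarrow> 1 \<in> Delta p"
  using prime_gt_1_nat[of p] by (simp add: Delta_def)

lemma mod_Delta: "i \<in> Delta p \<Longrightarrow> i mod p = i"
  by (auto simp: Delta_def)

lemma not_dvd_Delta: "i \<in> Delta p \<Longrightarrow> \<not> p dvd i"
  by (auto simp: Delta_def dest: dvd_imp_le)

lemma dmult_in_Delta:
  assumes "prime p" "i \<in> Delta p" "j \<in> Delta p"
  shows "dmult p i j \<in> Delta p"
proof -
  have "\<not> p dvd i * j"
    using assms not_dvd_Delta prime_dvd_mult_iff by blast
  moreover have "i * j mod p < p"
    using prime_gt_1_nat[OF assms(1)] by simp
  ultimately show ?thesis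
    by (auto simp: Delta_def dmult_def dvd_eq_mod_eq_0)
qed

lemma dmult_commute: "dmult p i j = dmult p j i"
  by (simp add: dmult_def mult.commute)

lemma dmult_assoc: "dmult p (dmult p i j) k = dmult p i (dmult p j k)"
  by (simp add: dmult_def mod_mult_left_eq mod_mult_right_eq mult.assoc)

lemma dmult_1_left: "i \<in> Delta p \<Longrightarrow> dmult p 1 i = i"
  and dmult_1_right: "i \<in> Delta p \<Longrightarrow> dmult p i 1 = i"
  by (simp_all add: dmult_def mod_Delta)

lemma dmult_left_cancel:
  assumes "prime p" "i \<in> Delta p" "j \<in> Delta p" "k \<in> Delta p" "dmult p i j = dmult p i k"
  shows "j = k"
proof -
  have "coprime i p"
    using assms(1,2) not_dvd_Delta prime_imp_coprime coprime_commute by blast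
  moreover have "[i * j = i * k] (mod p)"
    using assms(5) by (simp add: dmult_def cong_def)
  ultimately have "[j = k] (mod p)"
    using cong_mult_lcancel_nat by blast
  then show ?thesis
    using assms(3,4) by (simp add: cong_def mod_Delta)
qed

lemma dmult_right_inverse_exists:
  assumes "prime p" "i \<in> Delta p"
  shows "\<exists>j\<in>Delta p. dmult p i j = 1"
proof -
  have "coprime i p"
    using assms not_dvd_Delta prime_imp_coprime coprime_commute by blast
  then obtain x where "[i * x = 1] (mod p)"
    using cong_solve_coprime_nat by auto
  then have x: "i * (x mod p) mod p = 1"
    using prime_gt_1_nat[OF assms(1)] by (simp add: cong_def mod_mult_right_eq)
  then have "x mod p \<noteq> 0"
    by (metis mod_0 mult_0_right zero_neq_one)
  moreover have "x mod p < p"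
    using prime_gt_1_nat[OF assms(1)] by simp
  ultimately have "x mod p \<in> Delta p"
    by (auto simp: Delta_def)
  with x show ?thesis
    by (auto simp: dmult_def)
qed

lemma dinv_unique:
  assumes "prime p" "i \<in> Delta p" "j \<in> Delta p" "dmult p i j = 1"
  shows "dinv p i = j"
  unfolding dinv_def
  using assms dmult_left_cancel[OF assms(1,2)] by (intro the_equality) auto

lemma dinv_in_Delta: "prime p \<Longrightarrow> i \<in> Delta p \<Longrightarrow> dinv p i \<in> Delta p"
  and dmult_dinv: "prime p \<Longrightarrow> i \<in> Delta p \<Longrightarrow> dmult p i (dinv p i) = 1"
  using dinv_unique dmult_right_inverse_exists by metis+

lemma dinv_dinv: "prime p \<Longrightarrow> i \<in> Delta p \<Longrightarrow> dinv p (dinv p i) = i"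
  by (metis dinv_in_Delta dinv_unique dmult_commute dmult_dinv)

lemma dinv_1: "prime p \<Longrightarrow> dinv p 1 = 1"
  by (metis dinv_unique dmult_1_left one_in_Delta)

lemma dinv_dmult:
  assumes "prime p" "i \<in> Delta p" "j \<in> Delta p"
  shows "dinv p (dmult p i j) = dmult p (dinv p i) (dinv p j)"
proof (rule dinv_unique)
  have "dmult p (dmult p i j) (dmult p (dinv p i) (dinv p j))
      = dmult p (dmult p i (dinv p i)) (dmult p j (dinv p j))"
    by (metis dmult_assoc dmult_commute)
  then show "dmult p (dmult p i j) (dmult p (dinv p i) (dinv p j)) = 1"
    using assms dmult_1_left[OF one_in_Delta[OF assms(1)]] by (simp add: dmult_dinv)
qed (use assms in \<open>simp_all add: dmult_in_Delta dinv_in_Delta\<close>)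

lemma dmult_dinv_cancel:
  "prime p \<Longrightarrow> s \<in> Delta p \<Longrightarrow> t \<in> Delta p \<Longrightarrow> dmult p (dmult p s t) (dinv p t) = s"
  by (metis dmult_assoc dmult_dinv dmult_1_right)

lemma dmult_minus_1: "i \<in> Delta p \<Longrightarrow> dmult p i (p - 1) = p - i"
proof -
  assume "i \<in> Delta p"
  then have "1 \<le> i" "i < p" by (auto simp: Delta_def)
  then have "i * (p - 1) = (p - i) + (i - 1) * p"
    by (simp add: algebra_simps diff_mult_distrib diff_mult_distrib2)
  then have "i * (p - 1) mod p = (p - i) mod p"
    by (metis mod_mult_self1)
  with \<open>1 \<le> i\<close> \<open>i < p\<close> show ?thesis
    by (simp add: dmult_def)
qed

lemma sum_Delta_reindex_dmult:
  assumes "prime p" "t \<in> Delta p"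
  shows "(\<Sum>s\<in>Delta p. F (dmult p s t)) = (\<Sum>s\<in>Delta p. F s)"
proof -
  have "dmult p (dmult p s (dinv p t)) t = s" if "s \<in> Delta p" for s
    using dmult_dinv_cancel[OF assms(1) that dinv_in_Delta[OF assms]] by (simp add: dinv_dinv[OF assms])
  then show ?thesis
    by (intro sum.reindex_bij_witness[of _ "\<lambda>s. dmult p s (dinv p t)" "\<lambda>s. dmult p s t"])
      (use assms in \<open>auto simp: dmult_dinv_cancel dmult_in_Delta dinv_in_Delta\<close>)
qed

lemma sum_Delta_reindex_dinv:
  "prime p \<Longrightarrow> (\<Sum>s\<in>Delta p. F (dinv p s)) = (\<Sum>s\<in>Delta p. F s)"
  by (rule sum.reindex_bij_witness[of _ "dinv p" "dinv p"]) (auto simp: dinv_dinv dinv_in_Delta)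

lemma sum_Delta_dmult_eq:
  assumes "prime p" "a \<in> Delta p" "t \<in> Delta p"
  shows "(\<Sum>s\<in>Delta p. if dmult p s a = t then F s else 0) = F (dmult p t (dinv p a))"
proof -
  have "dmult p s a = t \<longleftrightarrow> s = dmult p t (dinv p a)" if "s \<in> Delta p" for s
    using dmult_dinv_cancel[OF assms(1) that assms(2)] dinv_dinv[OF assms(1,2)]
      dmult_dinv_cancel[OF assms(1,3) dinv_in_Delta[OF assms(1,2)]]
    by auto
  then have "(\<Sum>s\<in>Delta p. if dmult p s a = t then F s else 0)
      = (\<Sum>s\<in>Delta p. if s = dmult p t (dinv p a) then F s else 0)"
    by (intro sum.cong) auto
  also have "\<dots> = F (dmult p t (dinv p a))"
    using assms by (simp add: dmult_in_Delta dinv_in_Delta)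
  finally show ?thesis .
qed

section \<open>Characters of Delta\<close>

lemma character_dmult:
  "is_character p \<psi> \<Longrightarrow> i \<in> Delta p \<Longrightarrow> j \<in> Delta p \<Longrightarrow> \<psi> (dmult p i j) = \<psi> i * \<psi> j"
  by (simp add: is_character_def)

lemma character_1:
  assumes "prime p" "is_character p (\<psi> :: nat \<Rightarrow> 'o::idom)"
  shows "\<psi> 1 = 1"
proof -
  have "\<psi> 1 * \<psi> 1 = \<psi> 1"
    using character_dmult[OF assms(2) one_in_Delta one_in_Delta] dmult_1_left one_in_Delta assms(1)
    by simp
  moreover have "\<psi> 1 dvd 1"
    using assms one_in_Delta unfolding is_character_def by blast
  ultimately show ?thesis
    by (metis dvd_0_left_iff mult_cancel_right2 zero_neq_one)
qed

lemma character_dinv: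
  "prime p \<Longrightarrow> is_character p (\<psi> :: nat \<Rightarrow> 'o::idom) \<Longrightarrow> i \<in> Delta p \<Longrightarrow> \<psi> i * \<psi> (dinv p i) = 1"
  using character_dmult[of p \<psi> i "dinv p i"] character_1[of p \<psi>] dinv_in_Delta[of p i] dmult_dinv[of p i]
  by simp

lemma character_dinv_dmult:
  "prime p \<Longrightarrow> is_character p \<psi> \<Longrightarrow> i \<in> Delta p \<Longrightarrow> j \<in> Delta p \<Longrightarrow>
    \<psi> (dinv p (dmult p i j)) = \<psi> (dinv p i) * \<psi> (dinv p j)"
  by (simp add: character_dmult dinv_dmult dinv_in_Delta)

lemma sum_character_shift:
  assumes "prime p" "is_character p (\<psi> :: nat \<Rightarrow> 'o::idom)" "i \<in> Delta p"
  shows "(\<Sum>t\<in>Delta p. \<psi> t * F (dmult p t i)) = \<psi> (dinv p i) * (\<Sum>s\<in>Delta p. \<psi> s * F s)"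
proof -
  have "(\<Sum>t\<in>Delta p. \<psi> t * F (dmult p t i))
      = (\<Sum>t\<in>Delta p. \<psi> (dmult p (dmult p t i) (dinv p i)) * F (dmult p t i))"
    using assms by (simp add: dmult_dinv_cancel)
  also have "\<dots> = (\<Sum>s\<in>Delta p. \<psi> (dmult p s (dinv p i)) * F s)"
    by (rule sum_Delta_reindex_dmult[OF assms(1,3)])
  also have "\<dots> = \<psi> (dinv p i) * (\<Sum>s\<in>Delta p. \<psi> s * F s)"
    using assms by (simp add: sum_distrib_left character_dmult dinv_in_Delta ac_simps)
  finally show ?thesis .
qed

lemma sum_character_eq_0:
  assumes "prime p" "is_character p (\<psi> :: nat \<Rightarrow> 'o::idom)" "s \<in> Delta p" "\<psi> s \<noteq> 1"
  shows "(\<Sum>t\<in>Delta p. \<psi> t) = 0"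
proof -
  have "(\<Sum>t\<in>Delta p. \<psi> t) = (\<Sum>t\<in>Delta p. \<psi> (dmult p t s))"
    using assms(1,3) by (rule sum_Delta_reindex_dmult[symmetric])
  also have "\<dots> = \<psi> s * (\<Sum>t\<in>Delta p. \<psi> t)"
    using assms by (simp add: sum_distrib_left character_dmult mult.commute)
  finally have "(\<psi> s - 1) * (\<Sum>t\<in>Delta p. \<psi> t) = 0"
    by (simp add: algebra_simps)
  with assms(4) show ?thesis
    by simp
qed

section \<open>Units and principal ideals of O\<close>

lemma of_nat_dvd_one_if_coprime:
  assumes "coprime l m" "\<not> (of_nat l :: 'a::idom) dvd 1"
    and factor: "\<And>x::'a. x \<noteq> 0 \<Longrightarrow> \<exists>u n. u dvd 1 \<and> x = u * of_nat l ^ n"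
  shows "(of_nat m :: 'a) dvd 1"
proof -
  obtain u v where uv: "u * int l + v * int m = 1"
    using bezout_int[of "int l" "int m"] assms(1) by auto
  have "\<not> (of_nat l :: 'a) dvd of_nat m"
  proof
    assume "(of_nat l :: 'a) dvd of_nat m"
    then have "(of_nat l :: 'a) dvd of_int u * of_nat l + of_int v * of_nat m"
      by simp
    also have "of_int u * of_nat l + of_int v * of_nat m = (of_int (u * int l + v * int m) :: 'a)"
      by simp
    finally show False
      using uv assms(2) by simp
  qed
  moreover from this have "(of_nat m :: 'a) \<noteq> 0"
    by auto
  then obtain w n where w: "w dvd 1" "(of_nat m :: 'a) = w * of_nat l ^ n"
    using factor by blast
  ultimately have "n = 0"
    by (metis dvd_mult dvd_power gr0I)
  with w show ?thesis
    by simp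
qed

lemma O_ring_of_nat_dvd_one:
  assumes "prime l" "\<not> l dvd m" "O_ring l p TYPE('o::idom)"
  shows "(of_nat m :: 'o) dvd 1"
proof -
  from assms(3) have "\<not> (of_nat l :: 'o) dvd 1"
    and "\<And>x::'o. x \<noteq> 0 \<Longrightarrow> \<exists>u n. u dvd 1 \<and> x = u * of_nat l ^ n"
    unfolding O_ring_def by blast+
  then show ?thesis
    by (rule of_nat_dvd_one_if_coprime[OF prime_imp_coprime[OF assms(1,2)]])
qed

lemma two_dvd_one_if_even_unit:
  assumes "even m" "(of_nat m :: 'a::comm_semiring_1) dvd 1"
  shows "(2 :: 'a) dvd 1"
proof -
  from assms(1) obtain k where "m = 2 * k"
    by (rule evenE)
  then have "(2 :: 'a) dvd of_nat m"
    by simp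
  then show ?thesis
    using assms(2) by (rule dvd_trans)
qed

lemma inv_pm1_mult:
  assumes "(of_nat (p - 1) :: 'o::idom) dvd 1"
  shows "inv_pm1 p * (of_nat (p - 1) :: 'o) = 1"
proof -
  obtain w where w: "w * (of_nat (p - 1) :: 'o) = 1"
    using assms by (auto elim: dvdE simp: mult.commute)
  have "u = w" if "u * (of_nat (p - 1) :: 'o) = 1" for u
  proof -
    have "u = u * (of_nat (p - 1) * w)"
      using w by (simp add: mult.commute)
    also have "\<dots> = w"
      using that by (simp add: mult.assoc[symmetric])
    finally show ?thesis .
  qed
  then have "inv_pm1 p = w"
    unfolding inv_pm1_def using w by blast
  with w show ?thesis
    by simp
qed

lemma ideal_rel_Image: "ideal_rel c `` {a} = {x. (c::'o::comm_ring_1) dvd a - x}"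
  by (auto simp: ideal_rel_def)

lemma ideal_rel_Image_eq_iff:
  "ideal_rel (c::'o::comm_ring_1) `` {a} = ideal_rel c `` {b} \<longleftrightarrow> c dvd a - b"
proof
  assume "ideal_rel c `` {a} = ideal_rel c `` {b}"
  then show "c dvd a - b"
    unfolding ideal_rel_Image by (metis dvd_0_right mem_Collect_eq right_minus_eq)
next
  assume "c dvd a - b"
  then have "c dvd a - x \<longleftrightarrow> c dvd b - x" for x
    using dvd_add_left_iff[of c "a - b" "b - x"] by simp
  then show "ideal_rel c `` {a} = ideal_rel c `` {b}"
    unfolding ideal_rel_Image by simp
qed

lemma ideal_rel_0 [simp]: "ideal_rel (0 :: 'o::comm_ring_1) = Id"
  by (auto simp: ideal_rel_def)

lemma quot_iso_ideal_relI:
  fixes G :: "'o::comm_ring_1 \<Rightarrow> 'a"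
  assumes carrier: "A = range G" and R_sub: "R \<subseteq> A \<times> A"
    and rel: "\<And>a b. (G a, G b) \<in> R \<longleftrightarrow> c dvd a - b"
    and add: "\<And>a b. add (G a) (G b) = G (a + b)"
    and smul: "\<And>r a. smul r (G a) = G (r * a)"
  shows "quot_iso A R add smul UNIV (ideal_rel c) (+) (*)"
proof -
  define \<Phi> where "\<Phi> X = {b. \<exists>a. G a \<in> X \<and> c dvd a - b}" for X
  have \<Phi>_class: "\<Phi> (R `` {G a}) = ideal_rel c `` {a}" for a
  proof -
    have "c dvd a - b" if "c dvd a - a'" "c dvd a' - b" for a' b
      using dvd_add[OF that] by simp
    then show ?thesis
      unfolding \<Phi>_def ideal_rel_Image by (auto simp: rel)
  qed
  have R_class: "R `` {G a} = G ` (ideal_rel c `` {a})" for a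
  proof (intro set_eqI iffI)
    fix x
    assume "x \<in> R `` {G a}"
    moreover from this obtain a' where "x = G a'"
      using R_sub carrier by blast
    ultimately show "x \<in> G ` (ideal_rel c `` {a})"
      by (auto simp: rel ideal_rel_Image)
  qed (auto simp: rel ideal_rel_Image)
  have A_quot: "A // R = range (\<lambda>a. R `` {G a})"
    unfolding carrier quotient_def by auto
  have O_quot: "UNIV // ideal_rel c = range (\<lambda>a. ideal_rel c `` {a})"
    unfolding quotient_def by auto
  have \<Phi>_eq_iff: "\<Phi> (R `` {G a}) = ideal_rel c `` {b} \<longleftrightarrow> c dvd a - b" for a b
    by (simp add: \<Phi>_class ideal_rel_Image_eq_iff)
  have "inj_on \<Phi> (A // R)"
  proof (rule inj_onI)
    fix X Y
    assume "X \<in> A // R" "Y \<in> A // R" "\<Phi> X = \<Phi> Y"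
    then obtain a b where "X = R `` {G a}" "Y = R `` {G b}" "ideal_rel c `` {a} = ideal_rel c `` {b}"
      unfolding A_quot by (auto simp: \<Phi>_class)
    then show "X = Y"
      by (simp add: R_class)
  qed
  then have "bij_betw \<Phi> (A // R) (UNIV // ideal_rel c)"
    unfolding bij_betw_def A_quot O_quot by (simp add: image_image \<Phi>_class)
  moreover have "c dvd (a + b) - (x + y)" if "c dvd a - x" "c dvd b - y" for a b x y :: 'o
    using dvd_add[OF that] by (simp add: algebra_simps)
  moreover have "c dvd r * a - r * x" if "c dvd a - x" for r a x :: 'o
    using dvd_mult[OF that, of r] by (simp add: algebra_simps)
  ultimately show ?thesis
    unfolding quot_iso_def carrier
    by (intro exI[of _ \<Phi>]) (auto simp: add smul \<Phi>_eq_iff)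
qed

lemma ptheta_val_eq_0:
  assumes "prime p" "is_character p (\<psi> :: nat \<Rightarrow> 'o::idom)" "\<psi> (p - 1) = 1"
    and "s \<in> Delta p" "\<psi> s \<noteq> 1" and "(2::'o) \<noteq> 0"
  shows "ptheta_val p \<psi> = 0"
proof -
  define S where "S = (\<Sum>i\<in>Delta p. of_nat i * \<psi> (dinv p i))"
  have minus_1: "p - 1 \<in> Delta p"
    using prime_gt_1_nat[OF assms(1)] by (simp add: Delta_def)
  have "\<psi> (dinv p (p - 1)) = 1"
    using character_dinv[OF assms(1,2) minus_1] assms(3) by simp
  have "S = (\<Sum>i\<in>Delta p. of_nat (dmult p i (p - 1)) * \<psi> (dinv p (dmult p i (p - 1))))"
    unfolding S_def by (rule sum_Delta_reindex_dmult[OF assms(1) minus_1, symmetric])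
  also have "\<dots> = (\<Sum>i\<in>Delta p. of_nat (p - i) * \<psi> (dinv p i))"
  proof (intro sum.cong refl)
    fix i
    assume i: "i \<in> Delta p"
    show "of_nat (dmult p i (p - 1)) * \<psi> (dinv p (dmult p i (p - 1))) = of_nat (p - i) * \<psi> (dinv p i)"
      by (subst character_dinv_dmult[OF assms(1,2) i minus_1])
        (simp only: dmult_minus_1[OF i] \<open>\<psi> (dinv p (p - 1)) = 1\<close> mult_1_right)
  qed
  finally have "S + S = (\<Sum>i\<in>Delta p. (of_nat i + of_nat (p - i)) * \<psi> (dinv p i))"
    unfolding S_def by (simp add: sum.distrib distrib_right)
  also have "\<dots> = of_nat p * (\<Sum>i\<in>Delta p. \<psi> (dinv p i))"
    unfolding sum_distrib_left by (intro sum.cong) (auto simp: Delta_def simp flip: of_nat_add)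
  also have "\<dots> = 0"
    using sum_character_eq_0[OF assms(1,2,4,5)] by (simp add: sum_Delta_reindex_dinv[OF assms(1)])
  finally have "2 * S = 0"
    by simp
  with assms(6) show ?thesis
    by (simp add: ptheta_val_def S_def)
qed

section \<open>The Bowen-Franks module of Y\<close>

lemma adj_op_derived_bouquet:
  fixes \<alpha> :: "'e \<Rightarrow> nat" and h :: "unit \<times> nat \<Rightarrow> 'o::comm_semiring_1"
  assumes "prime p" "finite E" "\<alpha> ` E \<subseteq> Delta p"
  shows "adj_op (E \<times> Delta p) (der_org (\<lambda>_. ())) (der_trm (dmult p) \<alpha> (\<lambda>_. ())) h (v, t) =
    (if t \<in> Delta p then \<Sum>e\<in>E. h ((), dmult p t (dinv p (\<alpha> e))) else 0)"
proof -
  have "adj_op (E \<times> Delta p) (der_org (\<lambda>_. ())) (der_trm (dmult p) \<alpha> (\<lambda>_. ())) h (v, t) =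
      (\<Sum>e\<in>E. \<Sum>s\<in>Delta p. if dmult p s (\<alpha> e) = t then h ((), s) else 0)"
    using assms(2)
    by (simp add: adj_op_def sum.inter_filter sum.cartesian_product der_org_def der_trm_def
        case_prod_beta)
  also have "\<dots> = (if t \<in> Delta p then \<Sum>e\<in>E. h ((), dmult p t (dinv p (\<alpha> e))) else 0)"
  proof (cases "t \<in> Delta p")
    case True
    with assms show ?thesis
      by (auto intro!: sum.cong sum_Delta_dmult_eq)
  next
    case False
    have "dmult p s (\<alpha> e) \<noteq> t" if "e \<in> E" "s \<in> Delta p" for e s
      using False that assms dmult_in_Delta by blast
    with False show ?thesis
      by (auto intro!: sum.neutral)
  qed
  finally show ?thesis .
qed

lemma adj_op_Y:
  fixes h :: "unit \<times> nat \<Rightarrow> 'o::comm_semiring_1"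
  assumes "prime p"
  shows "adj_op (EY p) orgY (trmY p) h (v, t) =
    (if t \<in> Delta p then h ((), t) + (\<Sum>i\<in>Delta p. of_nat i * h ((), dmult p t i)) else 0)"
proof -
  define L where "L = Sigma (Delta p) (\<lambda>i. {1..i})"
  have EdX: "EdX p = insert (0, 0) L" "(0, 0) \<notin> L" "finite L"
    by (auto simp: EdX_def L_def Delta_def)
  have "alphaX p e \<in> Delta p" if "e \<in> EdX p" for e
  proof (cases "e = (0, 0)")
    case False
    with that have "fst e \<in> Delta p"
      by (auto simp: EdX_def Delta_def)
    with False show ?thesis
      by (simp add: alphaX_def dinv_in_Delta[OF assms])
  qed (use one_in_Delta[OF assms] in \<open>simp add: alphaX_def\<close>)
  then have alpha: "alphaX p ` EdX p \<subseteq> Delta p"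
    by blast
  have "(\<Sum>e\<in>L. h ((), dmult p t (dinv p (alphaX p e)))) = (\<Sum>(i, k)\<in>L. h ((), dmult p t i))"
    using EdX(2) by (intro sum.cong) (auto simp: alphaX_def L_def dinv_dinv[OF assms])
  also have "\<dots> = (\<Sum>i\<in>Delta p. of_nat i * h ((), dmult p t i))"
    unfolding L_def by (subst sum.Sigma[symmetric]) auto
  finally show ?thesis
    using adj_op_derived_bouquet[OF assms _ alpha, of h v t] EdX dinv_1[OF assms] dmult_1_right[of t p]
    by (simp add: EY_def orgY_def trmY_def orgX_def trmX_def alphaX_def)
qed

definition id_minus_adj_Y :: "nat \<Rightarrow> (unit \<times> nat \<Rightarrow> 'o::comm_ring_1) \<Rightarrow> unit \<times> nat \<Rightarrow> 'o" where
  "id_minus_adj_Y p h = (\<lambda>v. h v - adj_op (EY p) orgY (trmY p) h v)"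

lemma id_minus_adj_Y_apply:
  "prime p \<Longrightarrow> t \<in> Delta p \<Longrightarrow>
    id_minus_adj_Y p h ((), t) = - (\<Sum>i\<in>Delta p. of_nat i * h ((), dmult p t i))"
  by (simp add: id_minus_adj_Y_def adj_op_Y)

definition char_vec :: "nat \<Rightarrow> (nat \<Rightarrow> 'o::idom) \<Rightarrow> 'o \<Rightarrow> unit \<times> nat \<Rightarrow> 'o" where
  "char_vec p \<psi> c = (\<lambda>(v, t). if t \<in> Delta p then c * \<psi> (dinv p t) else 0)"

definition char_coeff :: "nat \<Rightarrow> (nat \<Rightarrow> 'o::idom) \<Rightarrow> (unit \<times> nat \<Rightarrow> 'o) \<Rightarrow> 'o" where
  "char_coeff p \<psi> f = (\<Sum>s\<in>Delta p. \<psi> s * f ((), s))"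

lemma char_vec_apply: "char_vec p \<psi> c (v, t) = (if t \<in> Delta p then c * \<psi> (dinv p t) else 0)"
  by (simp add: char_vec_def)

lemma char_vec_in_free_mod: "char_vec p \<psi> c \<in> free_mod (VY p)"
  by (auto simp: free_mod_def VY_def VtX_def char_vec_apply)

lemma char_vec_diff: "(\<lambda>v. char_vec p \<psi> a v - char_vec p \<psi> b v) = char_vec p \<psi> (a - b)"
  by (auto simp: char_vec_def algebra_simps)

lemma fadd_char_vec: "fadd (char_vec p \<psi> a) (char_vec p \<psi> b) = char_vec p \<psi> (a + b)"
  by (auto simp: fadd_def char_vec_def algebra_simps)

lemma fsmul_char_vec: "fsmul r (char_vec p \<psi> a) = char_vec p \<psi> (r * a)"
  by (auto simp: fsmul_def char_vec_def)

lemma char_coeff_char_vec: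
  assumes "prime p" "is_character p \<psi>"
  shows "char_coeff p \<psi> (char_vec p \<psi> c) = of_nat (p - 1) * c"
proof -
  have "char_coeff p \<psi> (char_vec p \<psi> c) = (\<Sum>s\<in>Delta p. c)"
    unfolding char_coeff_def
    by (intro sum.cong refl) (metis assms character_dinv char_vec_apply mult.left_commute mult_1_right)
  then show ?thesis
    by (simp add: card_Delta)
qed

lemma id_minus_adj_Y_char_vec:
  assumes "prime p" "is_character p \<psi>"
  shows "id_minus_adj_Y p (char_vec p \<psi> k) = char_vec p \<psi> (ptheta_val p \<psi> * k)"
proof
  fix w :: "unit \<times> nat"
  obtain t where w: "w = ((), t)"
    by (cases w) simp
  show "id_minus_adj_Y p (char_vec p \<psi> k) w = char_vec p \<psi> (ptheta_val p \<psi> * k) w"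
  proof (cases "t \<in> Delta p")
    case True
    have "id_minus_adj_Y p (char_vec p \<psi> k) w
        = - (\<Sum>i\<in>Delta p. k * \<psi> (dinv p t) * (of_nat i * \<psi> (dinv p i)))"
      unfolding w id_minus_adj_Y_apply[OF assms(1) True]
      using True by (intro arg_cong[where f = uminus] sum.cong)
        (simp_all add: char_vec_apply dmult_in_Delta[OF assms(1)] character_dinv_dmult[OF assms])
    then show ?thesis
      unfolding sum_distrib_left[symmetric] by (simp add: w char_vec_apply True ptheta_val_def mult_ac)
  next
    case False
    then show ?thesis
      by (simp add: w id_minus_adj_Y_def adj_op_Y[OF assms(1)] char_vec_apply)
  qed
qed

lemma char_coeff_id_minus_adj_Y:
  assumes "prime p" "is_character p \<psi>"
  shows "char_coeff p \<psi> (id_minus_adj_Y p h) = ptheta_val p \<psi> * char_coeff p \<psi> h"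
proof -
  have "char_coeff p \<psi> (id_minus_adj_Y p h)
      = - (\<Sum>t\<in>Delta p. \<Sum>i\<in>Delta p. of_nat i * (\<psi> t * h ((), dmult p t i)))"
    unfolding char_coeff_def
    by (simp add: id_minus_adj_Y_apply[OF assms(1)] sum_distrib_left sum_negf mult.left_commute)
  also have "\<dots> = - (\<Sum>i\<in>Delta p. of_nat i * (\<Sum>t\<in>Delta p. \<psi> t * h ((), dmult p t i)))"
    by (subst sum.swap) (simp add: sum_distrib_left)
  also have "\<dots> = - (\<Sum>i\<in>Delta p. of_nat i * (\<psi> (dinv p i) * char_coeff p \<psi> h))"
    unfolding char_coeff_def
    by (intro arg_cong[where f = uminus] sum.cong refl)
      (simp add: sum_character_shift[OF assms, where F = "\<lambda>s. h ((), s)"])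
  also have "\<dots> = ptheta_val p \<psi> * char_coeff p \<psi> h"
    by (simp add: ptheta_val_def sum_distrib_right mult.assoc)
  finally show ?thesis .
qed

lemma e_proj_eq_char_vec:
  assumes "prime p" "is_character p \<psi>"
  shows "e_proj p \<psi> f = char_vec p \<psi> (inv_pm1 p * char_coeff p \<psi> f)"
proof
  fix w :: "unit \<times> nat"
  obtain t where w: "w = ((), t)"
    by (cases w) simp
  show "e_proj p \<psi> f w = char_vec p \<psi> (inv_pm1 p * char_coeff p \<psi> f) w"
  proof (cases "t \<in> Delta p")
    case True
    have "(\<Sum>\<sigma>\<in>Delta p. \<psi> \<sigma> * grp_act p (dinv p \<sigma>) f w) = (\<Sum>\<sigma>\<in>Delta p. \<psi> \<sigma> * f ((), dmult p \<sigma> t))"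
      using True by (intro sum.cong) (simp_all add: w grp_act_def dinv_dinv[OF assms(1)])
    also have "\<dots> = \<psi> (dinv p t) * char_coeff p \<psi> f"
      unfolding char_coeff_def by (rule sum_character_shift[OF assms True])
    finally show ?thesis
      by (simp add: e_proj_def w char_vec_apply True mult_ac)
  qed (simp add: w e_proj_def grp_act_def char_vec_apply)
qed

lemma ebf_carrier_eq_range_char_vec:
  fixes \<psi> :: "nat \<Rightarrow> 'o::idom"
  assumes "prime p" "is_character p \<psi>" "inv_pm1 p * of_nat (p - 1) = (1 :: 'o)"
  shows "ebf_carrier p \<psi> = range (char_vec p \<psi>)"
proof
  show "ebf_carrier p \<psi> \<subseteq> range (char_vec p \<psi>)"
    unfolding ebf_carrier_def by (auto simp: e_proj_eq_char_vec[OF assms(1,2)])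
  have "e_proj p \<psi> (char_vec p \<psi> c) = char_vec p \<psi> c" for c
    using assms(3)
    by (simp add: e_proj_eq_char_vec[OF assms(1,2)] char_coeff_char_vec[OF assms(1,2)]
        mult.assoc[symmetric])
  then show "range (char_vec p \<psi>) \<subseteq> ebf_carrier p \<psi>"
    unfolding ebf_carrier_def using char_vec_in_free_mod by (metis image_eqI image_subsetI)
qed

lemma char_vec_in_range_id_minus_adj_Y_iff:
  fixes \<psi> :: "nat \<Rightarrow> 'o::idom"
  assumes "prime p" "is_character p \<psi>" "inv_pm1 p * of_nat (p - 1) = (1 :: 'o)"
  shows "(\<exists>h\<in>free_mod (VY p). char_vec p \<psi> d = id_minus_adj_Y p h) \<longleftrightarrow> ptheta_val p \<psi> dvd d"
proof
  assume "\<exists>h\<in>free_mod (VY p). char_vec p \<psi> d = id_minus_adj_Y p h"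
  then obtain h where "char_vec p \<psi> d = id_minus_adj_Y p h"
    by blast
  then have "char_coeff p \<psi> (char_vec p \<psi> d) = char_coeff p \<psi> (id_minus_adj_Y p h)"
    by simp
  then have coeff: "of_nat (p - 1) * d = ptheta_val p \<psi> * char_coeff p \<psi> h"
    by (simp only: char_coeff_char_vec[OF assms(1,2)] char_coeff_id_minus_adj_Y[OF assms(1,2)])
  have "d = inv_pm1 p * (of_nat (p - 1) * d)"
    by (simp only: mult.assoc[symmetric] assms(3) mult_1_left)
  also have "\<dots> = ptheta_val p \<psi> * (inv_pm1 p * char_coeff p \<psi> h)"
    by (simp only: coeff mult.left_commute)
  finally show "ptheta_val p \<psi> dvd d"
    by (rule dvdI)
next
  assume "ptheta_val p \<psi> dvd d"
  then obtain k where "d = ptheta_val p \<psi> * k"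
    by blast
  then show "\<exists>h\<in>free_mod (VY p). char_vec p \<psi> d = id_minus_adj_Y p h"
    using id_minus_adj_Y_char_vec[OF assms(1,2)] char_vec_in_free_mod by metis
qed

lemma ebf_rel_char_vec_iff:
  fixes \<psi> :: "nat \<Rightarrow> 'o::idom"
  assumes "prime p" "is_character p \<psi>" "inv_pm1 p * of_nat (p - 1) = (1 :: 'o)"
  shows "(char_vec p \<psi> a, char_vec p \<psi> b) \<in> ebf_rel p \<psi> \<longleftrightarrow> ptheta_val p \<psi> dvd a - b"
  unfolding ebf_rel_def bf_rel_def ebf_carrier_eq_range_char_vec[OF assms]
  using char_vec_in_range_id_minus_adj_Y_iff[OF assms]
  by (simp add: char_vec_diff id_minus_adj_Y_def char_vec_in_free_mod)

theorem theorem5p11: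
  fixes p l :: nat and \<psi> :: "nat \<Rightarrow> 'o::idom"
  assumes "prime p" and "odd p" and "prime l" and "\<not> l dvd (p - 1)"
    and "O_ring l p TYPE('o)"
    and "is_character p \<psi>"
  shows "quot_iso (ebf_carrier p \<psi>) (ebf_rel p \<psi>) fadd fsmul
                  (UNIV :: 'o set) (ideal_rel (ptheta_val p \<psi>)) (+) (*)
       \<and> ((\<psi> (p - 1) = 1 \<and> (\<exists>\<sigma>\<in>Delta p. \<psi> \<sigma> \<noteq> 1)) \<longrightarrow>
          quot_iso (ebf_carrier p \<psi>) (ebf_rel p \<psi>) fadd fsmul
                   (UNIV :: 'o set) Id (+) (*))"
proof -
  have unit: "(of_nat (p - 1) :: 'o) dvd 1"
    using assms(3-5) by (rule O_ring_of_nat_dvd_one)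
  have inv: "inv_pm1 p * of_nat (p - 1) = (1 :: 'o)"
    by (rule inv_pm1_mult[OF unit])
  have iso: "quot_iso (ebf_carrier p \<psi>) (ebf_rel p \<psi>) fadd fsmul
      (UNIV :: 'o set) (ideal_rel (ptheta_val p \<psi>)) (+) (*)"
    by (rule quot_iso_ideal_relI[OF ebf_carrier_eq_range_char_vec[OF assms(1,6) inv] _
          ebf_rel_char_vec_iff[OF assms(1,6) inv] fadd_char_vec fsmul_char_vec])
      (simp add: ebf_rel_def)
  have "(2 :: 'o) \<noteq> 0"
    using two_dvd_one_if_even_unit[OF _ unit] assms(2) by auto
  then have "ptheta_val p \<psi> = 0" if "\<psi> (p - 1) = 1" "\<sigma> \<in> Delta p" "\<psi> \<sigma> \<noteq> 1" for \<sigma>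
    by (rule ptheta_val_eq_0[OF assms(1,6) that])
  with iso show ?thesis
    by auto
qed

end
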